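(* Let $k$ be a field of characteristic zero, let $q\in k$ satisfy $q^m=1$ with $m$ the minimal positive such integer, and assume $k$ contains all $m$th roots of unity. Let $f\in k(x,y)$ and suppose $f=\tau_{x,q}(g)-g+c$ with $g\in k(x,y)$ and $c\in k(y)(x^m)$. Let $\partial_y\in\{\Delta_y,D_y\}$. Then $f$ is exact with respect to $(\Delta_{x,q},\partial_y)$ if and only if $c=\partial_y(d)$ for some $d\in k(y)(x^m)$.
   Context: On $k(x,y)$: $\tau_{x,q}(f(x,y))=f(qx,y)$, $\sigma_y(f(x,y))=f(x,y+1)$, $\Delta_{x,q}=\tau_{x,q}-1$, $\Delta_y=\sigma_y-1$, and $D_y=\partial/\partial y$. A rational function $f\in k(x,y)$ is exact with respect to a pair $(\partial_x,\partial_y)$ of such operators if $f=\partial_x(g)+\partial_y(h)$ for some $g,h\in k(x,y)$. Here $k(y)(x^m)$ denotes the subfield of $k(x,y)$ generated over $k(y)$ by $x^m$. *)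

theory Defs
  imports "HOL-Computational_Algebra.Computational_Algebra"
begin

text \<open>Model of k(x,y): the fraction field of k[y][x].  An element of type
  'a poly poly is a polynomial in x (outer) whose coefficients are polynomials
  in y (inner).\<close>

type_synonym 'a ratxy = "'a poly poly fract"

definition frep :: "'a::field ratxy \<Rightarrow> 'a poly poly \<times> 'a poly poly" where
  "frep f = (SOME p. snd p \<noteq> 0 \<and> f = Fract (fst p) (snd p))"

definition tau_poly :: "'a::field \<Rightarrow> 'a poly poly \<Rightarrow> 'a poly poly" where
  "tau_poly q p = p \<circ>\<^sub>p [:0, [:q:]:]"

definition sigma_poly :: "'a::field poly poly \<Rightarrow> 'a poly poly" where
  "sigma_poly p = map_poly (\<lambda>c. c \<circ>\<^sub>p [:1, 1:]) p"

definition dy_poly :: "'a::field poly poly \<Rightarrow> 'a poly poly" where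
  "dy_poly p = map_poly pderiv p"

definition tau_xq :: "'a::field \<Rightarrow> 'a ratxy \<Rightarrow> 'a ratxy" where
  "tau_xq q f = (let r = frep f in Fract (tau_poly q (fst r)) (tau_poly q (snd r)))"

definition sigma_y :: "'a::field ratxy \<Rightarrow> 'a ratxy" where
  "sigma_y f = (let r = frep f in Fract (sigma_poly (fst r)) (sigma_poly (snd r)))"

definition Delta_xq :: "'a::field \<Rightarrow> 'a ratxy \<Rightarrow> 'a ratxy" where
  "Delta_xq q f = tau_xq q f - f"

definition Delta_y :: "'a::field ratxy \<Rightarrow> 'a ratxy" where
  "Delta_y f = sigma_y f - f"

definition D_y :: "'a::field ratxy \<Rightarrow> 'a ratxy" where
  "D_y f = (let r = frep f; a = fst r; b = snd r in
            Fract (dy_poly a * b - a * dy_poly b) (b * b))"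

definition exact :: "('a::field ratxy \<Rightarrow> 'a ratxy) \<Rightarrow> ('a ratxy \<Rightarrow> 'a ratxy) \<Rightarrow> 'a ratxy \<Rightarrow> bool" where
  "exact dx dy f \<longleftrightarrow> (\<exists>g h. f = dx g + dy h)"

definition in_ky_xm :: "nat \<Rightarrow> 'a::field ratxy \<Rightarrow> bool" where
  "in_ky_xm m f \<longleftrightarrow> (\<exists>a b. b \<noteq> 0 \<and> f = Fract a b \<and>
      (\<forall>i. \<not> m dvd i \<longrightarrow> coeff a i = 0) \<and> (\<forall>i. \<not> m dvd i \<longrightarrow> coeff b i = 0))"

end

theory Submission
  imports Defs
begin

text \<open>Write \<open>\<tau>\<close> for \<open>\<tau>\<^sub>x\<^sub>,\<^sub>q\<close> and \<open>S = \<tau>\<^sup>0 + \<dots> + \<tau>\<^sup>m\<^sup>-\<^sup>1\<close> for its trace. \<open>S\<close>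
  annihilates \<open>\<Delta>\<^sub>x\<^sub>,\<^sub>q\<close>, multiplies elements of \<open>k(y)(x\<^sup>m)\<close> by \<open>m\<close>, has values fixed
  by \<open>\<tau>\<close>, and commutes with \<open>\<partial>\<^sub>y\<close>, since both \<open>\<Delta>\<^sub>y\<close> and \<open>D\<^sub>y\<close> commute with every
  \<open>\<tau>\<^sub>x\<^sub>,\<^sub>r\<close>. So applying \<open>S\<close> to \<open>f = \<Delta>\<^sub>x\<^sub>,\<^sub>q(G) + \<partial>\<^sub>y(h)\<close> gives
  \<open>c = \<partial>\<^sub>y(S h / m)\<close>, and \<open>S h / m\<close> lies in the fixed field of \<open>\<tau>\<close>, which is
  \<open>k(y)(x\<^sup>m)\<close> because \<open>q\<close> is a primitive \<open>m\<close>-th root of unity.\<close>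

lemma (in comm_monoid_set) lessThan_Suc_shift_cyclic:
  assumes "g n = g 0"
  shows "F (\<lambda>j. g (Suc j)) {..<n} = F g {..<n}"
proof (cases n)
  case (Suc k)
  have "F (\<lambda>j. g (Suc j)) {..<n} = F (\<lambda>j. g (Suc j)) {..<k} \<^bold>* g 0"
    using Suc assms by simp
  also have "\<dots> = F g {..<n}"
    using Suc by (simp only: lessThan_Suc_shift commute)
  finally show ?thesis .
qed simp

lemma additive_of_nat_mult:
  fixes f :: "'a::comm_ring_1 \<Rightarrow> 'a"
  assumes "additive f"
  shows "f (of_nat n * x) = of_nat n * f x"
  by (induction n) (simp_all add: algebra_simps additive.add[OF assms] additive.zero[OF assms])

lemma power_ne_one_if_not_dvd:
  fixes q :: "'a::monoid_mult"
  assumes "m > 0" and "q ^ m = 1" and "\<forall>j. 0 < j \<and> j < m \<longrightarrow> q ^ j \<noteq> 1"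
    and "\<not> m dvd i"
  shows "q ^ i \<noteq> 1"
proof
  assume "q ^ i = 1"
  moreover have "q ^ i = (q ^ m) ^ (i div m) * q ^ (i mod m)"
    by (metis mult_div_mod_eq power_add power_mult)
  ultimately have "q ^ (i mod m) = 1"
    using assms(2) by simp
  moreover have "0 < i mod m" "i mod m < m"
    using assms(1,4) by (simp_all add: mod_greater_zero_iff_not_dvd)
  ultimately show False
    using assms(3) by blast
qed

subsection \<open>The operators on polynomials\<close>

lemma coeff_tau_poly: "coeff (tau_poly q p) i = smult (q ^ i) (coeff p i)"
  by (simp add: tau_poly_def coeff_pcompose_linear poly_const_pow)

lemma tau_poly_add: "tau_poly q (a + b) = tau_poly q a + tau_poly q b"
  by (simp add: tau_poly_def pcompose_add)

lemma tau_poly_mult: "tau_poly q (a * b) = tau_poly q a * tau_poly q b"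
  by (simp add: tau_poly_def pcompose_mult)

lemma tau_poly_diff: "tau_poly q (a - b) = tau_poly q a - tau_poly q b"
  by (simp add: tau_poly_def pcompose_diff)

lemma tau_poly_prod: "tau_poly q (prod f A) = (\<Prod>i\<in>A. tau_poly q (f i))"
  by (simp add: tau_poly_def pcompose_prod)

lemma tau_poly_tau_poly: "tau_poly q (tau_poly r p) = tau_poly (q * r) p"
  by (simp add: poly_eq_iff coeff_tau_poly power_mult_distrib)

lemma tau_poly_1_left [simp]: "tau_poly 1 p = p"
  by (simp add: poly_eq_iff coeff_tau_poly)

lemma tau_poly_eq_0_iff:
  fixes q :: "'a::field"
  assumes "q \<noteq> 0"
  shows "tau_poly q p = 0 \<longleftrightarrow> p = 0"
  using assms by (auto simp: poly_eq_iff coeff_tau_poly)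

lemma tau_poly_fixed_coeff_eq_0:
  fixes q :: "'a::field"
  assumes "tau_poly q p = p" and "q ^ i \<noteq> 1"
  shows "coeff p i = 0"
proof -
  have "smult (q ^ i - 1) (coeff p i) = 0"
    using arg_cong[OF assms(1), of "\<lambda>p. coeff p i"] by (simp add: coeff_tau_poly smult_diff_left)
  then show ?thesis
    using assms(2) by simp
qed

lemma tau_poly_eq_self_if_coeffs:
  fixes r :: "'a::field"
  assumes "r ^ m = 1" and "\<forall>i. \<not> m dvd i \<longrightarrow> coeff p i = 0"
  shows "tau_poly r p = p"
proof (rule poly_eqI)
  fix i
  show "coeff (tau_poly r p) i = coeff p i"
  proof (cases "m dvd i")
    case True
    then have "r ^ i = 1"
      using assms(1) by (auto simp: power_mult)
    then show ?thesis by (simp add: coeff_tau_poly)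
  qed (use assms(2) in \<open>simp add: coeff_tau_poly\<close>)
qed

lemma coeff_sigma_poly: "coeff (sigma_poly p) i = coeff p i \<circ>\<^sub>p [:1, 1:]"
  by (simp add: sigma_poly_def coeff_map_poly)

lemma sigma_poly_add: "sigma_poly (a + b) = sigma_poly a + sigma_poly b"
  by (simp add: poly_eq_iff coeff_sigma_poly pcompose_add)

lemma sigma_poly_mult: "sigma_poly (a * b) = sigma_poly a * sigma_poly b"
  by (simp add: poly_eq_iff coeff_sigma_poly coeff_mult pcompose_sum pcompose_mult)

lemma sigma_poly_eq_0_iff: "sigma_poly p = 0 \<longleftrightarrow> (p :: 'a::field poly poly) = 0"
  by (simp add: poly_eq_iff[where 'a = "'a poly"] coeff_sigma_poly pcompose_eq_0_iff)

lemma sigma_poly_tau_poly: "sigma_poly (tau_poly q p) = tau_poly q (sigma_poly p)"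
  by (simp add: poly_eq_iff coeff_sigma_poly coeff_tau_poly pcompose_smult)

lemma coeff_dy_poly: "coeff (dy_poly p) i = pderiv (coeff p i)"
  by (simp add: dy_poly_def coeff_map_poly)

lemma dy_poly_add: "dy_poly (a + b) = dy_poly a + dy_poly b"
  by (simp add: poly_eq_iff coeff_dy_poly pderiv_add)

lemma dy_poly_mult: "dy_poly (a * b) = dy_poly a * b + a * dy_poly (b :: 'a::field poly poly)"
proof (rule poly_eqI)
  fix n
  have "coeff (dy_poly (a * b)) n =
      (\<Sum>i\<le>n. pderiv (coeff a i) * coeff b (n - i) + coeff a i * pderiv (coeff b (n - i)))"
    by (simp add: coeff_dy_poly coeff_mult pderiv_mult higher_pderiv_sum[of 1, simplified]
        algebra_simps)
  then show "coeff (dy_poly (a * b)) n = coeff (dy_poly a * b + a * dy_poly b) n"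
    by (simp add: coeff_dy_poly coeff_mult sum.distrib)
qed

lemma dy_poly_tau_poly: "dy_poly (tau_poly q p) = tau_poly q (dy_poly p)"
  by (simp add: poly_eq_iff coeff_dy_poly coeff_tau_poly pderiv_smult)

subsection \<open>The operators on rational functions\<close>

lemma frep: "snd (frep f) \<noteq> 0" "f = Fract (fst (frep f)) (snd (frep f))"
proof -
  obtain a b where "f = Fract a b" "b \<noteq> 0"
    by (cases f)
  then have "\<exists>p. snd p \<noteq> 0 \<and> f = Fract (fst p) (snd p)"
    by (intro exI[of _ "(a, b)"]) simp
  then have "snd (frep f) \<noteq> 0 \<and> f = Fract (fst (frep f)) (snd (frep f))"
    unfolding frep_def by (rule someI_ex)
  then show "snd (frep f) \<noteq> 0" "f = Fract (fst (frep f)) (snd (frep f))"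
    by blast+
qed

lemma Fract_map_frep:
  fixes F :: "'a::field poly poly \<Rightarrow> 'a poly poly"
  assumes mult: "\<And>x y. F (x * y) = F x * F y"
    and nonzero: "\<And>x. x \<noteq> 0 \<Longrightarrow> F x \<noteq> 0"
    and "b \<noteq> 0"
  shows "Fract (F (fst (frep (Fract a b)))) (F (snd (frep (Fract a b)))) = Fract (F a) (F b)"
proof -
  define r where "r = frep (Fract a b)"
  have "a * snd r = fst r * b"
    using frep[of "Fract a b"] \<open>b \<noteq> 0\<close> by (simp add: r_def eq_fract)
  then have "F a * F (snd r) = F (fst r) * F b"
    by (metis mult)
  then show ?thesis
    using frep(1)[of "Fract a b"] \<open>b \<noteq> 0\<close> by (simp add: r_def[symmetric] eq_fract nonzero)
qed

lemma tau_xq_Fract: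
  assumes "q \<noteq> 0" and "b \<noteq> 0"
  shows "tau_xq q (Fract a b) = Fract (tau_poly q a) (tau_poly q b)"
  using Fract_map_frep[of "tau_poly q"] assms
  by (simp add: tau_xq_def Let_def tau_poly_mult tau_poly_eq_0_iff)

lemma sigma_y_Fract:
  assumes "b \<noteq> 0"
  shows "sigma_y (Fract a b) = Fract (sigma_poly a) (sigma_poly b)"
  using Fract_map_frep[of sigma_poly] assms
  by (simp add: sigma_y_def Let_def sigma_poly_mult sigma_poly_eq_0_iff)

lemma D_y_Fract:
  fixes a b :: "'a::field poly poly"
  assumes "b \<noteq> 0"
  shows "D_y (Fract a b) = Fract (dy_poly a * b - a * dy_poly b) (b * b)"
proof -
  define A B where "A = fst (frep (Fract a b))" and "B = snd (frep (Fract a b))"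
  have "B \<noteq> 0" and "a * B = A * b"
    using frep[of "Fract a b"] assms by (simp_all add: A_def B_def eq_fract)
  have quotient_rule: "dy_poly a * B + a * dy_poly B = dy_poly A * b + A * dy_poly b"
    using arg_cong[OF \<open>a * B = A * b\<close>, of dy_poly] by (simp add: dy_poly_mult)
  have "(dy_poly a * b - a * dy_poly b) * (B * B)
      = (dy_poly a * B + a * dy_poly B) * (b * B) - (a * B) * b * dy_poly B - (a * B) * B * dy_poly b"
    by (simp add: algebra_simps)
  also have "\<dots> = (dy_poly A * b + A * dy_poly b) * (b * B) - (A * b) * b * dy_poly B - (A * b) * B * dy_poly b"
    by (simp only: quotient_rule \<open>a * B = A * b\<close>)
  also have "\<dots> = (dy_poly A * B - A * dy_poly B) * (b * b)"
    by (simp add: algebra_simps)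
  finally show ?thesis
    using \<open>B \<noteq> 0\<close> assms by (simp add: D_y_def Let_def A_def B_def eq_fract)
qed

lemma additive_tau_xq: "q \<noteq> 0 \<Longrightarrow> additive (tau_xq q)"
  by unfold_locales
    (case_tac x, case_tac y, simp add: tau_xq_Fract tau_poly_add tau_poly_mult tau_poly_eq_0_iff)

lemma tau_xq_tau_xq: "q \<noteq> 0 \<Longrightarrow> r \<noteq> 0 \<Longrightarrow> tau_xq q (tau_xq r x) = tau_xq (q * r) x"
  by (cases x) (simp add: tau_xq_Fract tau_poly_eq_0_iff tau_poly_tau_poly)

lemma tau_xq_1_left [simp]: "tau_xq 1 x = x"
  by (cases x) (simp add: tau_xq_Fract)

lemma sigma_y_tau_xq: "q \<noteq> 0 \<Longrightarrow> sigma_y (tau_xq q x) = tau_xq q (sigma_y x)"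
  by (cases x) (simp add: sigma_y_Fract tau_xq_Fract sigma_poly_eq_0_iff tau_poly_eq_0_iff
      sigma_poly_tau_poly)

lemma D_y_tau_xq: "q \<noteq> 0 \<Longrightarrow> D_y (tau_xq q x) = tau_xq q (D_y x)"
  by (cases x) (simp add: D_y_Fract tau_xq_Fract tau_poly_eq_0_iff tau_poly_mult tau_poly_diff
      dy_poly_tau_poly)

lemma of_nat_ratxy_eq_0_iff [simp]: "(of_nat n :: 'a::field_char_0 ratxy) = 0 \<longleftrightarrow> n = 0"
  by (simp add: of_nat_fract Zero_fract_def eq_fract)

definition tau_equivariant :: "('a::field ratxy \<Rightarrow> 'a ratxy) \<Rightarrow> bool" where
  "tau_equivariant d \<longleftrightarrow> additive d \<and> (\<forall>q x. q \<noteq> 0 \<longrightarrow> d (tau_xq q x) = tau_xq q (d x))"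

lemma tau_equivariant_Delta_y: "tau_equivariant Delta_y"
proof -
  have "additive sigma_y"
    by unfold_locales
      (case_tac x, case_tac y, simp add: sigma_y_Fract sigma_poly_add sigma_poly_mult sigma_poly_eq_0_iff)
  then show ?thesis
    unfolding tau_equivariant_def Delta_y_def
    by (auto simp: additive_def additive.diff[OF additive_tau_xq] sigma_y_tau_xq)
qed

lemma tau_equivariant_D_y: "tau_equivariant D_y"
proof -
  have "additive D_y"
    by unfold_locales
      (case_tac x, case_tac y, simp add: D_y_Fract eq_fract dy_poly_add dy_poly_mult algebra_simps)
  then show ?thesis
    by (simp add: tau_equivariant_def D_y_tau_xq)
qed

subsection \<open>The fixed field of \<open>\<tau>\<^sub>x\<^sub>,\<^sub>q\<close>\<close>

lemma tau_xq_fixed_if_in_ky_xm: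
  assumes "in_ky_xm m c" and "r ^ m = 1" and "m > 0"
  shows "tau_xq r c = c"
proof -
  obtain a b where "b \<noteq> 0" "c = Fract a b"
    "\<forall>i. \<not> m dvd i \<longrightarrow> coeff a i = 0" "\<forall>i. \<not> m dvd i \<longrightarrow> coeff b i = 0"
    using assms(1) unfolding in_ky_xm_def by blast
  moreover have "r \<noteq> 0"
    using assms(2,3) by (auto simp: power_0_left)
  ultimately show ?thesis
    using assms(2) by (simp add: tau_xq_Fract tau_poly_eq_self_if_coeffs)
qed

lemma in_ky_xm_if_tau_xq_fixed:
  assumes "tau_xq q u = u" and "m > 0" and "q ^ m = 1"
    and primitive: "\<forall>j. 0 < j \<and> j < m \<longrightarrow> q ^ j \<noteq> 1"
  shows "in_ky_xm m u"
proof -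
  have "q \<noteq> 0"
    using assms(2,3) by (auto simp: power_0_left)
  obtain a b where u: "u = Fract a b" "b \<noteq> 0"
    by (cases u)
  txt \<open>Multiplying by the conjugates of \<open>b\<close> turns the denominator into its norm,
    which is fixed by \<open>\<tau>\<^sub>x\<^sub>,\<^sub>q\<close>; then numerator and denominator are both fixed.\<close>
  define P where "P = (\<Prod>j<m - 1. tau_poly (q ^ Suc j) b)"
  define A B where "A = a * P" and "B = b * P"
  have "P \<noteq> 0"
    using u \<open>q \<noteq> 0\<close> by (simp add: P_def tau_poly_eq_0_iff)
  then have "B \<noteq> 0" and "u = Fract A B"
    using u by (simp_all add: A_def B_def eq_fract)
  have B_norm: "B = (\<Prod>j<m. tau_poly (q ^ j) b)"
    using \<open>m > 0\<close> by (cases m) (simp_all add: B_def P_def prod.lessThan_Suc_shift del: prod.lessThan_Suc)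
  have "tau_poly q B = (\<Prod>j<m. tau_poly (q ^ Suc j) b)"
    by (simp add: B_norm tau_poly_prod tau_poly_tau_poly)
  also have "\<dots> = B"
    unfolding B_norm by (rule prod.lessThan_Suc_shift_cyclic) (simp add: \<open>q ^ m = 1\<close>)
  finally have tau_B: "tau_poly q B = B" .
  have "Fract (tau_poly q A) B = Fract A B"
    using assms(1) \<open>u = Fract A B\<close> \<open>q \<noteq> 0\<close> \<open>B \<noteq> 0\<close> by (metis tau_xq_Fract tau_B)
  then have tau_A: "tau_poly q A = A"
    using \<open>B \<noteq> 0\<close> by (simp add: eq_fract)
  have "q ^ i \<noteq> 1" if "\<not> m dvd i" for i
    using power_ne_one_if_not_dvd[OF \<open>m > 0\<close> \<open>q ^ m = 1\<close> primitive that] .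
  then show ?thesis
    unfolding in_ky_xm_def using tau_poly_fixed_coeff_eq_0[OF tau_A] tau_poly_fixed_coeff_eq_0[OF tau_B]
      \<open>B \<noteq> 0\<close> \<open>u = Fract A B\<close> by blast
qed

subsection \<open>The trace of \<open>\<tau>\<^sub>x\<^sub>,\<^sub>q\<close>\<close>

definition tau_trace :: "'a::field \<Rightarrow> nat \<Rightarrow> 'a ratxy \<Rightarrow> 'a ratxy" where
  "tau_trace q m x = (\<Sum>j<m. tau_xq (q ^ j) x)"

context
  fixes q :: "'a::field" and m :: nat
  assumes m_pos: "m > 0" and root: "q ^ m = 1"
begin

lemma root_nonzero: "q \<noteq> 0"
  using m_pos root by (auto simp: power_0_left)

lemma additive_tau_trace: "additive (tau_trace q m)"
  by unfold_locales
    (simp add: tau_trace_def additive.add[OF additive_tau_xq] root_nonzero sum.distrib)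

lemma tau_trace_tau_xq: "tau_trace q m (tau_xq q x) = tau_trace q m x"
proof -
  have "tau_trace q m (tau_xq q x) = (\<Sum>j<m. tau_xq (q ^ Suc j) x)"
    by (simp add: tau_trace_def tau_xq_tau_xq root_nonzero mult.commute)
  also have "\<dots> = tau_trace q m x"
    unfolding tau_trace_def by (rule sum.lessThan_Suc_shift_cyclic) (simp add: root)
  finally show ?thesis .
qed

lemma tau_xq_tau_trace: "tau_xq q (tau_trace q m x) = tau_trace q m x"
proof -
  have "tau_xq q (tau_trace q m x) = tau_trace q m (tau_xq q x)"
    by (simp add: tau_trace_def additive.sum[OF additive_tau_xq] tau_xq_tau_xq root_nonzero
        mult.commute)
  then show ?thesis
    by (simp add: tau_trace_tau_xq)
qed

lemma tau_trace_Delta_xq: "tau_trace q m (Delta_xq q x) = 0"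
  by (simp add: Delta_xq_def additive.diff[OF additive_tau_trace] tau_trace_tau_xq)

lemma tau_trace_in_ky_xm:
  assumes "in_ky_xm m c"
  shows "tau_trace q m c = of_nat m * c"
proof -
  have "tau_xq (q ^ j) c = c" for j
    by (rule tau_xq_fixed_if_in_ky_xm[OF assms _ m_pos]) (metis root power_one power_mult mult.commute)
  then show ?thesis
    by (simp add: tau_trace_def)
qed

lemma tau_trace_commute:
  "tau_equivariant d \<Longrightarrow> tau_trace q m (d x) = d (tau_trace q m x)"
  by (simp add: tau_equivariant_def tau_trace_def additive.sum root_nonzero)

end

theorem theorem1:
  fixes q :: "'a::field_char_0" and m :: nat
    and f g c :: "'a ratxy" and dy :: "'a ratxy \<Rightarrow> 'a ratxy"
  assumes "m > 0" and "q ^ m = 1" and "\<forall>j. 0 < j \<and> j < m \<longrightarrow> q ^ j \<noteq> 1"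
    and "card {z::'a. z ^ m = 1} = m"
    and "in_ky_xm m c"
    and "f = tau_xq q g - g + c"
    and "dy \<in> {Delta_y, D_y}"
  shows "exact (Delta_xq q) dy f \<longleftrightarrow> (\<exists>d. in_ky_xm m d \<and> c = dy d)"
proof
  assume "\<exists>d. in_ky_xm m d \<and> c = dy d"
  then show "exact (Delta_xq q) dy f"
    unfolding exact_def Delta_xq_def using assms(6) by auto
next
  assume "exact (Delta_xq q) dy f"
  then obtain G h where "f = Delta_xq q G + dy h"
    unfolding exact_def by blast
  then have "c = Delta_xq q G - Delta_xq q g + dy h"
    using assms(6) by (simp add: Delta_xq_def algebra_simps)
  have equivariant: "tau_equivariant dy"
    using assms(7) tau_equivariant_Delta_y tau_equivariant_D_y by blast
  define u where "u = tau_trace q m h / of_nat m"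
  have m_u: "of_nat m * u = tau_trace q m h"
    using assms(1) by (simp add: u_def)
  have "of_nat m * c = tau_trace q m c"
    using assms(1,2,5) by (simp add: tau_trace_in_ky_xm)
  also have "\<dots> = tau_trace q m (dy h)"
    using \<open>c = _\<close> assms(1,2)
    by (simp add: additive.add[OF additive_tau_trace] additive.diff[OF additive_tau_trace]
        tau_trace_Delta_xq)
  also have "\<dots> = of_nat m * dy u"
    using equivariant assms(1,2) m_u
    by (metis tau_trace_commute additive_of_nat_mult tau_equivariant_def)
  finally have "c = dy u"
    using assms(1) by simp
  have "of_nat m * tau_xq q u = of_nat m * u"
    using m_u tau_xq_tau_trace[OF assms(1,2)] root_nonzero[OF assms(1,2)]
    by (metis additive_of_nat_mult additive_tau_xq)
  then have "in_ky_xm m u"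
    using assms(1) in_ky_xm_if_tau_xq_fixed[OF _ assms(1,2,3)] by simp
  with \<open>c = dy u\<close> show "\<exists>d. in_ky_xm m d \<and> c = dy d"
    by blast
qed

end
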